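(* Let $(X_{1,\infty},f_{1,\infty})$ be a topological nonautonomous dynamical system, $\mathcal{U}_{1,\infty}\in\mathcal{L}(X_{1,\infty})$, and assume that $f_{1,\infty}$ is equicontinuous. Then for each $m\ge1$ the sequence $\mathcal{V}_{1,\infty}$ defined by $\mathcal{V}_n:=\bigvee_{i=0}^{m-1}f_n^{-i}\mathcal{U}_{n+i}$ is an element of $\mathcal{L}(X_{1,\infty})$.
   Context: Topological NDS: compact metric spaces $(X_n,\varrho_n)$ and continuous maps $f_n:X_n\to X_{n+1}$; $f_n^i=f_{n+i-1}\circ\cdots\circ f_n$, $f_n^0=\mathrm{id}$, $f_n^{-i}\mathcal{U}=\{(f_n^i)^{-1}(U):U\in\mathcal{U}\}$; the join of covers consists of all intersections of one member from each. Equicontinuity: for every $\varepsilon>0$ there is $\delta>0$ with $\varrho_{n+1}(f_nx,f_ny)<\varepsilon$ whenever $\varrho_n(x,y)<\delta$, uniformly in $n$. The Lebesgue number of an open cover of a compact metric space is the maximal $\varepsilon>0$ such that every $\varepsilon$-ball lies in a member of the cover. $\mathcal{L}(X_{1,\infty})$ is the family of sequences $\{\mathcal{U}_n\}$, $\mathcal{U}_n$ an open cover of $X_n$, whose Lebesgue numbers are bounded away from zero uniformly in $n$. *)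

theory Defs
  imports "HOL-Analysis.Analysis"
begin

definition is_NDS ::
  "(nat \<Rightarrow> 'a set) \<Rightarrow> (nat \<Rightarrow> 'a \<Rightarrow> 'a \<Rightarrow> real) \<Rightarrow> (nat \<Rightarrow> 'a \<Rightarrow> 'a) \<Rightarrow> bool" where
  "is_NDS X d f \<longleftrightarrow>
     (\<forall>n. Metric_space (X n) (d n)
        \<and> compact_space (Metric_space.mtopology (X n) (d n))
        \<and> continuous_map (Metric_space.mtopology (X n) (d n))
                          (Metric_space.mtopology (X (Suc n)) (d (Suc n))) (f n))"

text \<open>f_n^i = f_{n+i-1} o ... o f_n, f_n^0 = id\<close>
fun fiter :: "(nat \<Rightarrow> 'a \<Rightarrow> 'a) \<Rightarrow> nat \<Rightarrow> nat \<Rightarrow> 'a \<Rightarrow> 'a" where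
  "fiter f n 0 = id"
| "fiter f n (Suc i) = f (n + i) \<circ> fiter f n i"

definition preimage_cover ::
  "(nat \<Rightarrow> 'a set) \<Rightarrow> (nat \<Rightarrow> 'a \<Rightarrow> 'a) \<Rightarrow> nat \<Rightarrow> nat \<Rightarrow> 'a set set \<Rightarrow> 'a set set" where
  "preimage_cover X f n i \<U> = {{x \<in> X n. fiter f n i x \<in> U} | U. U \<in> \<U>}"

definition join_covers :: "nat \<Rightarrow> (nat \<Rightarrow> 'a set set) \<Rightarrow> 'a set set" where
  "join_covers m C = {(\<Inter>i\<in>{..<m}. g i) | g. \<forall>i<m. g i \<in> C i}"

definition open_cover :: "'a topology \<Rightarrow> 'a set set \<Rightarrow> bool" where
  "open_cover T \<U> \<longleftrightarrow> (\<forall>U\<in>\<U>. openin T U) \<and> \<Union>\<U> = topspace T"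

definition lebesgue_ok :: "'a set \<Rightarrow> ('a \<Rightarrow> 'a \<Rightarrow> real) \<Rightarrow> 'a set set \<Rightarrow> real \<Rightarrow> bool" where
  "lebesgue_ok M d \<U> \<epsilon> \<longleftrightarrow> (\<forall>x\<in>M. \<exists>U\<in>\<U>. Metric_space.mball M d x \<epsilon> \<subseteq> U)"

definition Lcovers ::
  "(nat \<Rightarrow> 'a set) \<Rightarrow> (nat \<Rightarrow> 'a \<Rightarrow> 'a \<Rightarrow> real) \<Rightarrow> (nat \<Rightarrow> 'a set set) set" where
  "Lcovers X d = {\<U>. (\<forall>n. open_cover (Metric_space.mtopology (X n) (d n)) (\<U> n))
                     \<and> (\<exists>\<epsilon>>0. \<forall>n. lebesgue_ok (X n) (d n) (\<U> n) \<epsilon>)}"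

definition equicontinuous_NDS ::
  "(nat \<Rightarrow> 'a set) \<Rightarrow> (nat \<Rightarrow> 'a \<Rightarrow> 'a \<Rightarrow> real) \<Rightarrow> (nat \<Rightarrow> 'a \<Rightarrow> 'a) \<Rightarrow> bool" where
  "equicontinuous_NDS X d f \<longleftrightarrow>
     (\<forall>\<epsilon>>0. \<exists>\<delta>>0. \<forall>n. \<forall>x\<in>X n. \<forall>y\<in>X n.
        d n x y < \<delta> \<longrightarrow> d (Suc n) (f n x) (f n y) < \<epsilon>)"

end

theory Submission
  imports Defs
begin

text \<open>The members of the join are open because every iterate \<open>f\<^sub>n\<^sup>i\<close> is continuous.
  For the Lebesgue number: if \<open>\<epsilon>\<close> is a uniform Lebesgue number of the \<open>\<U>\<^sub>n\<close>,
  equicontinuity yields one \<open>\<delta>\<close> such that, for all \<open>n\<close> and all \<open>i < m\<close>, \<open>f\<^sub>n\<^sup>i\<close> maps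
  \<open>\<delta>\<close>-balls into \<open>\<epsilon>\<close>-balls. Hence the \<open>\<delta>\<close>-ball around \<open>x\<close> lies in the preimage of a
  member of \<open>\<U>\<^sub>n\<^sub>+\<^sub>i\<close> for each \<open>i < m\<close>, and so in the intersection of these
  preimages, which is a member of \<open>\<V>\<^sub>n\<close>.\<close>

lemma continuous_map_fiter:
  assumes "\<And>k. continuous_map (T k) (T (Suc k)) (f k)"
  shows "continuous_map (T n) (T (n + i)) (fiter f n i)"
proof (induction i)
  case 0
  then show ?case by simp
next
  case (Suc i)
  have "continuous_map (T n) (T (Suc (n + i))) (f (n + i) \<circ> fiter f n i)"
    by (rule continuous_map_compose[OF Suc.IH assms])
  then show ?case by (simp add: comp_def)
qed

lemma fiter_in_space:
  assumes "\<And>k x. x \<in> X k \<Longrightarrow> f k x \<in> X (Suc k)" and "x \<in> X n"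
  shows "fiter f n i x \<in> X (n + i)"
  using assms by (induction i) auto

lemma is_NDS_Metric_space: "is_NDS X d f \<Longrightarrow> Metric_space (X n) (d n)"
  unfolding is_NDS_def by blast

lemma is_NDS_topspace: "is_NDS X d f \<Longrightarrow> topspace (Metric_space.mtopology (X n) (d n)) = X n"
  by (rule Metric_space.topspace_mtopology[OF is_NDS_Metric_space])

lemma is_NDS_continuous_map:
  "is_NDS X d f \<Longrightarrow>
    continuous_map (Metric_space.mtopology (X n) (d n)) (Metric_space.mtopology (X (Suc n)) (d (Suc n))) (f n)"
  unfolding is_NDS_def by blast

lemma is_NDS_maps_into:
  assumes "is_NDS X d f" and "x \<in> X n"
  shows "f n x \<in> X (Suc n)"
  using continuous_map_image_subset_topspace[OF is_NDS_continuous_map[OF assms(1)]] assms(2)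
  by (auto simp: is_NDS_topspace[OF assms(1)])

lemma is_NDS_fiter_in_space: "is_NDS X d f \<Longrightarrow> x \<in> X n \<Longrightarrow> fiter f n i x \<in> X (n + i)"
  by (rule fiter_in_space[of X f]) (auto intro: is_NDS_maps_into)

lemma uniformly_equicontinuous_fiter:
  assumes maps: "\<And>k x. x \<in> X k \<Longrightarrow> f k x \<in> X (Suc k)"
    and equi: "equicontinuous_NDS X d f" and "e > 0"
  shows "\<exists>\<delta>>0. \<forall>i\<le>m. \<forall>n. \<forall>x\<in>X n. \<forall>y\<in>X n.
           d n x y < \<delta> \<longrightarrow> d (n + i) (fiter f n i x) (fiter f n i y) < e"
  using \<open>e > 0\<close>
proof (induction m arbitrary: e)
  case 0
  then show ?case by auto
next
  case (Suc m)
  obtain \<delta>\<^sub>1 where "\<delta>\<^sub>1 > 0"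
    and \<delta>\<^sub>1: "\<And>k x y. x \<in> X k \<Longrightarrow> y \<in> X k \<Longrightarrow> d k x y < \<delta>\<^sub>1 \<Longrightarrow> d (Suc k) (f k x) (f k y) < e"
    using equi \<open>e > 0\<close> unfolding equicontinuous_NDS_def by meson
  \<comment> \<open>The first \<open>m\<close> iterates are controlled to within \<open>min e \<delta>\<^sub>1\<close>, so one more map stays within \<open>e\<close>.\<close>
  obtain \<delta> where "\<delta> > 0" and \<delta>: "\<forall>i\<le>m. \<forall>n. \<forall>x\<in>X n. \<forall>y\<in>X n.
      d n x y < \<delta> \<longrightarrow> d (n + i) (fiter f n i x) (fiter f n i y) < min e \<delta>\<^sub>1"
    using Suc.IH[of "min e \<delta>\<^sub>1"] \<open>e > 0\<close> \<open>\<delta>\<^sub>1 > 0\<close> by auto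
  have "d (n + i) (fiter f n i x) (fiter f n i y) < e"
    if "i \<le> Suc m" "x \<in> X n" "y \<in> X n" "d n x y < \<delta>" for i n x y
  proof (cases "i \<le> m")
    case True
    then show ?thesis using \<delta> that by fastforce
  next
    case False
    then have "i = Suc m" using that(1) by simp
    moreover have "d (n + m) (fiter f n m x) (fiter f n m y) < \<delta>\<^sub>1"
      using \<delta> that by fastforce
    ultimately show ?thesis
      using \<delta>\<^sub>1 fiter_in_space[of X f, OF maps] that(2,3) by simp
  qed
  then show ?case using \<open>\<delta> > 0\<close> by blast
qed

lemma join_coversI:
  "(\<And>i. i < m \<Longrightarrow> g i \<in> C i) \<Longrightarrow> (\<Inter>i<m. g i) \<in> join_covers m C"
  unfolding join_covers_def by auto

lemma join_coversE:
  assumes "V \<in> join_covers m C"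
  obtains g where "\<And>i. i < m \<Longrightarrow> g i \<in> C i" and "V = (\<Inter>i<m. g i)"
  using assms unfolding join_covers_def by auto

lemma open_cover_join_covers:
  assumes "\<And>i. i < m \<Longrightarrow> open_cover T (C i)" and "m > 0"
  shows "open_cover T (join_covers m C)"
proof -
  have opens: "openin T U" if "i < m" "U \<in> C i" for i U
    using assms(1)[OF that(1)] that(2) unfolding open_cover_def by simp
  have covers: "\<Union> (C i) = topspace T" if "i < m" for i
    using assms(1)[OF that] unfolding open_cover_def by simp
  have "openin T V" if V: "V \<in> join_covers m C" for V
  proof -
    obtain g where g: "\<And>i. i < m \<Longrightarrow> g i \<in> C i" and "V = (\<Inter>i<m. g i)"
      using join_coversE[OF V] by metis
    have "openin T (\<Inter>i<m. g i)"
      using \<open>m > 0\<close> g opens by (intro openin_INT2) auto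
    then show ?thesis
      using \<open>V = (\<Inter>i<m. g i)\<close> by simp
  qed
  moreover have "\<Union> (join_covers m C) = topspace T"
  proof (intro subset_antisym subsetI)
    fix x
    assume "x \<in> \<Union> (join_covers m C)"
    then obtain V g where "x \<in> V" "\<And>i. i < m \<Longrightarrow> g i \<in> C i" "V = (\<Inter>i<m. g i)"
      by (auto elim: join_coversE)
    then have "x \<in> \<Union> (C 0)"
      using \<open>m > 0\<close> by auto
    then show "x \<in> topspace T"
      using covers \<open>m > 0\<close> by simp
  next
    fix x
    assume "x \<in> topspace T"
    then have "\<forall>i. \<exists>U. i < m \<longrightarrow> U \<in> C i \<and> x \<in> U"
      using covers by (metis UnionE)
    then obtain g where "\<And>i. i < m \<Longrightarrow> g i \<in> C i \<and> x \<in> g i"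
      by metis
    then have "(\<Inter>i<m. g i) \<in> join_covers m C" and "x \<in> (\<Inter>i<m. g i)"
      by (auto intro: join_coversI)
    then show "x \<in> \<Union> (join_covers m C)"
      by blast
  qed
  ultimately show ?thesis
    unfolding open_cover_def by simp
qed

lemma lebesgue_ok_join_covers:
  assumes "\<And>i. i < m \<Longrightarrow> lebesgue_ok M d (C i) \<delta>"
  shows "lebesgue_ok M d (join_covers m C) \<delta>"
  unfolding lebesgue_ok_def
proof
  fix x
  assume "x \<in> M"
  then have "\<forall>i. \<exists>U. i < m \<longrightarrow> U \<in> C i \<and> Metric_space.mball M d x \<delta> \<subseteq> U"
    using assms unfolding lebesgue_ok_def by metis
  then obtain g where "\<And>i. i < m \<Longrightarrow> g i \<in> C i \<and> Metric_space.mball M d x \<delta> \<subseteq> g i"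
    by metis
  then have "(\<Inter>i<m. g i) \<in> join_covers m C" and "Metric_space.mball M d x \<delta> \<subseteq> (\<Inter>i<m. g i)"
    by (auto intro: join_coversI)
  then show "\<exists>V\<in>join_covers m C. Metric_space.mball M d x \<delta> \<subseteq> V"
    by blast
qed

lemma preimage_coverI:
  "U \<in> \<U> \<Longrightarrow> {x \<in> X n. fiter f n i x \<in> U} \<in> preimage_cover X f n i \<U>"
  unfolding preimage_cover_def by auto

lemma preimage_coverE:
  assumes "V \<in> preimage_cover X f n i \<U>"
  obtains U where "U \<in> \<U>" and "V = {x \<in> X n. fiter f n i x \<in> U}"
  using assms unfolding preimage_cover_def by auto

lemma open_cover_preimage_cover:
  assumes "is_NDS X d f"
    and "open_cover (Metric_space.mtopology (X (n + i)) (d (n + i))) \<U>"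
  shows "open_cover (Metric_space.mtopology (X n) (d n)) (preimage_cover X f n i \<U>)"
proof -
  have top: "topspace (Metric_space.mtopology (X k) (d k)) = X k" for k
    using assms(1) by (rule is_NDS_topspace)
  have cont: "continuous_map (Metric_space.mtopology (X n) (d n))
      (Metric_space.mtopology (X (n + i)) (d (n + i))) (fiter f n i)"
    using assms(1) by (intro continuous_map_fiter is_NDS_continuous_map)
  have opens: "openin (Metric_space.mtopology (X (n + i)) (d (n + i))) U" if "U \<in> \<U>" for U
    using assms(2) that unfolding open_cover_def by simp
  have covers: "\<Union> \<U> = X (n + i)"
    using assms(2) top unfolding open_cover_def by simp
  have "openin (Metric_space.mtopology (X n) (d n)) V" if V: "V \<in> preimage_cover X f n i \<U>" for V
  proof -
    obtain U where "U \<in> \<U>" and "V = {x \<in> X n. fiter f n i x \<in> U}"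
      using preimage_coverE[OF V] by metis
    then show ?thesis
      using openin_continuous_map_preimage[OF cont opens] top by simp
  qed
  moreover have "\<Union> (preimage_cover X f n i \<U>) = X n"
  proof (intro subset_antisym subsetI)
    fix x
    assume "x \<in> \<Union> (preimage_cover X f n i \<U>)"
    then show "x \<in> X n"
      by (auto elim: preimage_coverE)
  next
    fix x
    assume "x \<in> X n"
    then have "fiter f n i x \<in> \<Union> \<U>"
      using covers is_NDS_fiter_in_space[OF assms(1)] by simp
    then obtain U where "U \<in> \<U>" and "fiter f n i x \<in> U"
      by blast
    then have "{y \<in> X n. fiter f n i y \<in> U} \<in> preimage_cover X f n i \<U>"
      and "x \<in> {y \<in> X n. fiter f n i y \<in> U}"
      using \<open>x \<in> X n\<close> by (auto intro: preimage_coverI)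
    then show "x \<in> \<Union> (preimage_cover X f n i \<U>)"
      by blast
  qed
  ultimately show ?thesis
    unfolding open_cover_def top by simp
qed

lemma lebesgue_ok_preimage_cover:
  assumes "is_NDS X d f"
    and "lebesgue_ok (X (n + i)) (d (n + i)) \<U> e"
    and "\<forall>x\<in>X n. \<forall>y\<in>X n. d n x y < \<delta> \<longrightarrow> d (n + i) (fiter f n i x) (fiter f n i y) < e"
  shows "lebesgue_ok (X n) (d n) (preimage_cover X f n i \<U>) \<delta>"
  unfolding lebesgue_ok_def
proof
  fix x
  assume "x \<in> X n"
  then obtain U where "U \<in> \<U>"
    and U: "Metric_space.mball (X (n + i)) (d (n + i)) (fiter f n i x) e \<subseteq> U"
    using is_NDS_fiter_in_space[OF assms(1)] assms(2) unfolding lebesgue_ok_def by metis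
  have "Metric_space.mball (X n) (d n) x \<delta> \<subseteq> {y \<in> X n. fiter f n i y \<in> U}"
    using U assms(3) is_NDS_fiter_in_space[OF assms(1)] \<open>x \<in> X n\<close>
    by (auto simp: Metric_space.in_mball[OF is_NDS_Metric_space[OF assms(1)]])
  then show "\<exists>V\<in>preimage_cover X f n i \<U>. Metric_space.mball (X n) (d n) x \<delta> \<subseteq> V"
    using preimage_coverI[OF \<open>U \<in> \<U>\<close>] by blast
qed

theorem mainTheorem13:
  fixes X :: "nat \<Rightarrow> 'a set" and d :: "nat \<Rightarrow> 'a \<Rightarrow> 'a \<Rightarrow> real"
    and f :: "nat \<Rightarrow> 'a \<Rightarrow> 'a" and \<U> :: "nat \<Rightarrow> 'a set set" and m :: nat
  assumes "is_NDS X d f"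
    and "\<U> \<in> Lcovers X d"
    and "equicontinuous_NDS X d f"
    and "m \<ge> 1"
  shows "(\<lambda>n. join_covers m (\<lambda>i. preimage_cover X f n i (\<U> (n + i)))) \<in> Lcovers X d"
proof -
  obtain e where "e > 0" and e: "\<And>n. lebesgue_ok (X n) (d n) (\<U> n) e"
    using assms(2) unfolding Lcovers_def by blast
  obtain \<delta> where "\<delta> > 0" and \<delta>: "\<forall>i\<le>m. \<forall>n. \<forall>x\<in>X n. \<forall>y\<in>X n.
      d n x y < \<delta> \<longrightarrow> d (n + i) (fiter f n i x) (fiter f n i y) < e"
    using uniformly_equicontinuous_fiter[of X f, OF is_NDS_maps_into[OF assms(1)] assms(3) \<open>e > 0\<close>]
    by blast
  have "open_cover (Metric_space.mtopology (X n) (d n)) (preimage_cover X f n i (\<U> (n + i)))"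
    for n i
    using assms(2) by (intro open_cover_preimage_cover[OF assms(1)]) (simp add: Lcovers_def)
  then have "open_cover (Metric_space.mtopology (X n) (d n))
      (join_covers m (\<lambda>i. preimage_cover X f n i (\<U> (n + i))))" for n
    using assms(4) by (intro open_cover_join_covers) auto
  moreover have "lebesgue_ok (X n) (d n) (preimage_cover X f n i (\<U> (n + i))) \<delta>" if "i < m" for n i
    using \<delta> that by (intro lebesgue_ok_preimage_cover[OF assms(1) e]) simp
  then have "lebesgue_ok (X n) (d n)
      (join_covers m (\<lambda>i. preimage_cover X f n i (\<U> (n + i)))) \<delta>" for n
    by (intro lebesgue_ok_join_covers)
  ultimately show ?thesis
    unfolding Lcovers_def using \<open>\<delta> > 0\<close> by blast
qed

end
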